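(* Let $T>0$, $a\ge0$, and let $y$ be a non-negative, continuous, non-decreasing function on $[0,T)$. Let $F$ be a non-negative continuous function on $[2,+\infty)\times\mathbb{R}_+$ which is increasing with respect to its second variable. Assume that for every $0<t_0<t_1<T$ and every $p\in[2,+\infty)$, $$y(t_1)-y(t_0)\le a(t_1-t_0)+\int_{t_0}^{t_1}F(p,y(s))\,ds.$$ Let $\mu:\mathbb{R}_+\to\mathbb{R}_+$ be continuous, and assume that for every $x\ge0$ there exists $p_x\in[2,+\infty)$ such that $F(p_x,x)\le\mu(x)$. Then for all $0<t<T$, $$y(t)-y(0)\le at+\int_0^t\mu(y(s))\,ds.$$ *)

theory Defs
  imports "HOL-Analysis.Analysis"
begin

end

theory Submission
  imports Defs
begin

(* The function excess t = y t - a t - \<integral>\<^sub>0\<^sup>t \<mu>(y(s)) ds is non-increasing on (0, T).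
   On a short interval [u, v] pick p with F p (y v) \<le> \<mu> (y v); since y and F p are monotone,
   F p (y s) \<le> \<mu> (y v) on [u, v], and by uniform continuity of \<mu> \<circ> y this is at most
   \<mu> (y s) + e. So the hypothesis for this single p bounds the increment of excess on [u, v]
   by e (v - u). Adding up over a fine subdivision of [t0, t1] and letting e \<rightarrow> 0 gives
   excess t1 \<le> excess t0, and continuity of excess at 0 extends this to t0 = 0. *)

lemma increment_le_of_local_increment_le:
  fixes G :: "real \<Rightarrow> real"
  assumes "t0 \<le> t1" and "d > 0"
    and local: "\<And>u v. t0 \<le> u \<Longrightarrow> u < v \<Longrightarrow> v \<le> t1 \<Longrightarrow> v - u < d \<Longrightarrow>
      G v - G u \<le> e * (v - u)"
  shows "G t1 - G t0 \<le> e * (t1 - t0)"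
proof -
  have "G t1 - G u \<le> e * (t1 - u)"
    if "t0 \<le> u" "u \<le> t1" "t1 - u \<le> real n * (d / 2)" for n u
    using that
  proof (induction n arbitrary: u)
    case 0
    then show ?case by simp
  next
    case (Suc n)
    show ?case
    proof (cases "t1 - u < d")
      case True
      with Suc.prems local show ?thesis by (cases "u = t1") auto
    next
      case False
      define w where "w = u + d / 2"
      have "G t1 - G w \<le> e * (t1 - w)"
        using Suc.prems False \<open>d > 0\<close> by (intro Suc.IH) (auto simp: w_def algebra_simps)
      moreover have "G w - G u \<le> e * (w - u)"
        using Suc.prems False \<open>d > 0\<close> by (intro local) (auto simp: w_def)
      ultimately show ?thesis by (simp add: algebra_simps)
    qed
  qed
  moreover obtain n :: nat where "(t1 - t0) / (d / 2) \<le> real n"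
    using real_arch_simple by blast
  then have "t1 - t0 \<le> real n * (d / 2)"
    using \<open>d > 0\<close> by (simp add: field_simps)
  ultimately show ?thesis
    using assms(1) by blast
qed

lemma le_of_local_increment_le:
  fixes G :: "real \<Rightarrow> real"
  assumes "t0 \<le> t1"
    and local: "\<And>e. e > 0 \<Longrightarrow> \<exists>d>0. \<forall>u v. t0 \<le> u \<longrightarrow> u < v \<longrightarrow> v \<le> t1 \<longrightarrow> v - u < d \<longrightarrow>
      G v - G u \<le> e * (v - u)"
  shows "G t1 \<le> G t0"
proof (cases "t0 = t1")
  case False
  with assms(1) have len: "t1 - t0 > 0" by simp
  show ?thesis
  proof (rule field_le_epsilon)
    fix \<epsilon> :: real assume "\<epsilon> > 0"
    with len obtain d where "d > 0" and d: "\<forall>u v. t0 \<le> u \<longrightarrow> u < v \<longrightarrow> v \<le> t1 \<longrightarrow> v - u < d \<longrightarrow>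
      G v - G u \<le> \<epsilon> / (t1 - t0) * (v - u)"
      using local[of "\<epsilon> / (t1 - t0)"] by auto
    have "G t1 - G t0 \<le> \<epsilon> / (t1 - t0) * (t1 - t0)"
      by (rule increment_le_of_local_increment_le[OF assms(1) \<open>d > 0\<close>]) (use d in blast)
    then show "G t1 \<le> G t0 + \<epsilon>" using len by simp
  qed
qed simp

lemma le_left_endpoint_of_le_interior:
  fixes G :: "real \<Rightarrow> real"
  assumes "a < b" and "continuous_on {a..b} G" and "\<And>s. a < s \<Longrightarrow> s < b \<Longrightarrow> G b \<le> G s"
  shows "G b \<le> G a"
proof (rule tendsto_lowerbound)
  have "(G \<longlongrightarrow> G a) (at a within {a..b})"
    using assms(1,2) by (simp add: continuous_on_def)
  then show "(G \<longlongrightarrow> G a) (at_right a)"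
    using assms(1) by (simp add: at_within_Icc_at_right)
  show "\<forall>\<^sub>F s in at_right a. G b \<le> G s"
    unfolding eventually_at_right_field using assms(1,3) by blast
qed simp

locale monotone_integral_inequality =
  fixes T a :: real and y :: "real \<Rightarrow> real" and F :: "real \<Rightarrow> real \<Rightarrow> real"
    and \<mu> :: "real \<Rightarrow> real"
  assumes y_nonneg: "\<And>t. t \<in> {0..<T} \<Longrightarrow> y t \<ge> 0"
    and y_cont: "continuous_on {0..<T} y"
    and y_mono: "mono_on {0..<T} y"
    and F_cont: "continuous_on ({2..} \<times> {0..}) (\<lambda>(p, x). F p x)"
    and F_mono: "\<And>p. p \<ge> 2 \<Longrightarrow> mono_on {0..} (F p)"
    and ineq: "\<And>t0 t1 p. 0 < t0 \<Longrightarrow> t0 < t1 \<Longrightarrow> t1 < T \<Longrightarrow> p \<ge> 2 \<Longrightarrow>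
       y t1 - y t0 \<le> a * (t1 - t0) + integral {t0..t1} (\<lambda>s. F p (y s))"
    and mu_cont: "continuous_on {0..} \<mu>"
    and mu_bound: "\<And>x. x \<ge> 0 \<Longrightarrow> \<exists>px \<ge> 2. F px x \<le> \<mu> x"
begin

definition excess :: "real \<Rightarrow> real" where
  "excess t = y t - a * t - integral {0..t} (\<lambda>s. \<mu> (y s))"

lemma continuous_on_y:
  assumes "0 \<le> r" "t < T"
  shows "continuous_on {r..t} y"
  using y_cont by (rule continuous_on_subset) (use assms in auto)

lemma continuous_on_mu_y:
  assumes "0 \<le> r" "t < T"
  shows "continuous_on {r..t} (\<lambda>s. \<mu> (y s))"
  using mu_cont continuous_on_y[OF assms] by (rule continuous_on_compose2) (use assms y_nonneg in auto)

lemma continuous_on_F_y: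
  assumes "0 \<le> r" "t < T" "p \<ge> 2"
  shows "continuous_on {r..t} (\<lambda>s. F p (y s))"
proof -
  have "continuous_on {r..t} (\<lambda>s. (\<lambda>(p, x). F p x) (p, y s))"
    using F_cont continuous_on_Pair[OF continuous_on_const continuous_on_y[OF assms(1,2)]]
    by (rule continuous_on_compose2) (use assms y_nonneg in auto)
  then show ?thesis by simp
qed

lemma excess_increment_le:
  assumes uv: "0 < u" "u < v" "v < T"
    and osc: "\<And>s. s \<in> {u..v} \<Longrightarrow> \<mu> (y v) - e \<le> \<mu> (y s)"
  shows "excess v - excess u \<le> e * (v - u)"
proof -
  have yv: "y v \<ge> 0" using y_nonneg uv by auto
  then obtain p where p: "p \<ge> 2" "F p (y v) \<le> \<mu> (y v)" using mu_bound by blast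
  have "F p (y s) \<le> \<mu> (y v)" if "s \<in> {u..v}" for s
  proof -
    have "y s \<le> y v" "y s \<ge> 0" using y_mono y_nonneg that uv by (auto intro: mono_onD)
    then show ?thesis using F_mono[OF p(1)] yv p(2) by (fastforce dest: mono_onD)
  qed
  then have "integral {u..v} (\<lambda>s. F p (y s)) \<le> integral {u..v} (\<lambda>s. \<mu> (y v))"
    using continuous_on_F_y[OF _ uv(3) p(1), of u] uv
    by (intro integral_le integrable_continuous_interval) auto
  moreover have "integral {u..v} (\<lambda>s. \<mu> (y v) - e) \<le> integral {u..v} (\<lambda>s. \<mu> (y s))"
    using continuous_on_mu_y[OF _ uv(3), of u] uv osc
    by (intro integral_le integrable_continuous_interval) auto
  moreover have "integral {0..u} (\<lambda>s. \<mu> (y s)) + integral {u..v} (\<lambda>s. \<mu> (y s))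
      = integral {0..v} (\<lambda>s. \<mu> (y s))"
    using continuous_on_mu_y[OF _ uv(3)] uv
    by (intro Henstock_Kurzweil_Integration.integral_combine integrable_continuous_interval) auto
  ultimately show ?thesis
    using ineq[OF uv p(1)] uv by (simp add: excess_def algebra_simps)
qed

lemma excess_antitone:
  assumes "0 < t0" "t0 \<le> t1" "t1 < T"
  shows "excess t1 \<le> excess t0"
proof (rule le_of_local_increment_le[OF assms(2)])
  fix e :: real assume "e > 0"
  moreover have "uniformly_continuous_on {t0..t1} (\<lambda>s. \<mu> (y s))"
    using assms by (intro compact_uniformly_continuous continuous_on_mu_y) auto
  ultimately obtain d where "d > 0" and d: "\<And>s s'. s \<in> {t0..t1} \<Longrightarrow> s' \<in> {t0..t1} \<Longrightarrow>
      dist s' s < d \<Longrightarrow> dist (\<mu> (y s')) (\<mu> (y s)) < e"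
    unfolding uniformly_continuous_on_def by metis
  have "excess v - excess u \<le> e * (v - u)"
    if "t0 \<le> u" "u < v" "v \<le> t1" "v - u < d" for u v
  proof (rule excess_increment_le)
    show "0 < u" "u < v" "v < T" using assms that by auto
    fix s assume "s \<in> {u..v}"
    then have "\<bar>\<mu> (y s) - \<mu> (y v)\<bar> < e"
      using that d[of v s] by (auto simp: dist_real_def)
    then show "\<mu> (y v) - e \<le> \<mu> (y s)" by linarith
  qed
  with \<open>d > 0\<close> show "\<exists>d>0. \<forall>u v. t0 \<le> u \<longrightarrow> u < v \<longrightarrow> v \<le> t1 \<longrightarrow> v - u < d \<longrightarrow>
      excess v - excess u \<le> e * (v - u)" by blast
qed

lemma excess_le_initial:
  assumes "0 < t" "t < T"
  shows "excess t \<le> excess 0"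
proof (rule le_left_endpoint_of_le_interior[OF assms(1)])
  show "continuous_on {0..t} excess"
    unfolding excess_def using assms continuous_on_y[of 0 t]
    by (intro continuous_on_diff continuous_on_mult continuous_on_const continuous_on_id
        indefinite_integral_continuous_1 integrable_continuous_interval continuous_on_mu_y) auto
  show "excess t \<le> excess s" if "0 < s" "s < t" for s
    using that assms by (intro excess_antitone) auto
qed

end

theorem lemma10p1:
  fixes T a :: real and y :: "real \<Rightarrow> real" and F :: "real \<Rightarrow> real \<Rightarrow> real"
    and \<mu> :: "real \<Rightarrow> real"
  assumes T_pos: "T > 0" and a_nonneg: "a \<ge> 0"
    and y_nonneg: "\<And>t. t \<in> {0..<T} \<Longrightarrow> y t \<ge> 0"
    and y_cont: "continuous_on {0..<T} y"
    and y_mono: "mono_on {0..<T} y"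
    and F_nonneg: "\<And>p x. p \<ge> 2 \<Longrightarrow> x \<ge> 0 \<Longrightarrow> F p x \<ge> 0"
    and F_cont: "continuous_on ({2..} \<times> {0..}) (\<lambda>(p, x). F p x)"
    and F_mono: "\<And>p. p \<ge> 2 \<Longrightarrow> mono_on {0..} (F p)"
    and ineq: "\<And>t0 t1 p. 0 < t0 \<Longrightarrow> t0 < t1 \<Longrightarrow> t1 < T \<Longrightarrow> p \<ge> 2 \<Longrightarrow>
       y t1 - y t0 \<le> a * (t1 - t0) + integral {t0..t1} (\<lambda>s. F p (y s))"
    and mu_cont: "continuous_on {0..} \<mu>"
    and mu_nonneg: "\<And>x. x \<ge> 0 \<Longrightarrow> \<mu> x \<ge> 0"
    and mu_bound: "\<And>x. x \<ge> 0 \<Longrightarrow> \<exists>px \<ge> 2. F px x \<le> \<mu> x"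
  shows "\<forall>t. 0 < t \<and> t < T \<longrightarrow> y t - y 0 \<le> a * t + integral {0..t} (\<lambda>s. \<mu> (y s))"
proof -
  interpret monotone_integral_inequality T a y F \<mu>
    using y_nonneg y_cont y_mono F_cont F_mono ineq mu_cont mu_bound by unfold_locales
  show ?thesis
  proof (intro allI impI)
    fix t assume "0 < t \<and> t < T"
    then show "y t - y 0 \<le> a * t + integral {0..t} (\<lambda>s. \<mu> (y s))"
      using excess_le_initial[of t] by (simp add: excess_def)
  qed
qed

end
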